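(* Let $(\mathcal A,\rho)$ be a pseudo-quasimetric space. Define $x\sim y$ iff $\rho(x,y)=0$, let $\tilde{\mathcal A}=\mathcal A/\sim$ with classes $[x]$, and set $\tilde\rho([x],[y])=\inf\{\rho(a,b):a\in[x],b\in[y]\}$. Then $(\tilde{\mathcal A},\tilde\rho)$ is a pseudo-metric space.
   Context: A pseudo-quasimetric space is a pair $(\mathcal A,\rho)$ with $\rho:\mathcal A\times\mathcal A\to\mathbb R_{\ge0}$ such that for all $x,y,z$: $\rho(x,x)=0$; $\rho(x,y)=\rho(y,x)$; and $\rho(x,z)\le C(\rho(x,y)+\rho(y,z))$ for a constant $C\ge1$ independent of $x,y,z$. It is a pseudo-metric space if in addition $x\ne y$ implies $\rho(x,y)>0$. (The relation $\sim$ is an equivalence relation.) *)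

theory Defs
  imports Complex_Main
begin

definition pseudo_quasimetric :: "'a set \<Rightarrow> ('a \<Rightarrow> 'a \<Rightarrow> real) \<Rightarrow> bool" where
  "pseudo_quasimetric A \<rho> \<longleftrightarrow>
     (\<forall>x\<in>A. \<forall>y\<in>A. \<rho> x y \<ge> 0) \<and>
     (\<forall>x\<in>A. \<rho> x x = 0) \<and>
     (\<forall>x\<in>A. \<forall>y\<in>A. \<rho> x y = \<rho> y x) \<and>
     (\<exists>C\<ge>1. \<forall>x\<in>A. \<forall>y\<in>A. \<forall>z\<in>A. \<rho> x z \<le> C * (\<rho> x y + \<rho> y z))"

definition pseudo_metric :: "'a set \<Rightarrow> ('a \<Rightarrow> 'a \<Rightarrow> real) \<Rightarrow> bool" where
  "pseudo_metric A \<rho> \<longleftrightarrow>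
     pseudo_quasimetric A \<rho> \<and> (\<forall>x\<in>A. \<forall>y\<in>A. x \<noteq> y \<longrightarrow> \<rho> x y > 0)"

definition zero_rel :: "'a set \<Rightarrow> ('a \<Rightarrow> 'a \<Rightarrow> real) \<Rightarrow> ('a \<times> 'a) set" where
  "zero_rel A \<rho> = {(x, y). x \<in> A \<and> y \<in> A \<and> \<rho> x y = 0}"

definition quot_dist :: "('a \<Rightarrow> 'a \<Rightarrow> real) \<Rightarrow> 'a set \<Rightarrow> 'a set \<Rightarrow> real" where
  "quot_dist \<rho> X Y = Inf {\<rho> a b | a b. a \<in> X \<and> b \<in> Y}"

end

theory Submission
  imports Defs
begin

text \<open>Two applications of the quasi-triangle inequality give \<open>\<rho> x y \<le> C\<^sup>2 \<rho> a b\<close> whenever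
  \<open>x \<sim> a\<close> and \<open>y \<sim> b\<close>; taking the infimum over the classes shows that the quotient
  distance of \<open>[x]\<close> and \<open>[y]\<close> lies between \<open>\<rho> x y / C\<^sup>2\<close> and \<open>\<rho> x y\<close>. Hence it inherits
  the quasi-triangle inequality with constant \<open>C\<^sup>3\<close>, and it vanishes only if \<open>\<rho> x y = 0\<close>,
  i.e. only if \<open>[x] = [y]\<close>.\<close>

lemma quot_dist_lower:
  assumes "a \<in> X" "b \<in> Y" and "\<And>a b. a \<in> X \<Longrightarrow> b \<in> Y \<Longrightarrow> c \<le> \<rho> a b"
  shows "quot_dist \<rho> X Y \<le> \<rho> a b"
  unfolding quot_dist_def
  by (rule cInf_lower) (use assms in \<open>auto simp: bdd_below_def\<close>)

lemma quot_dist_greatest: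
  assumes "X \<noteq> {}" "Y \<noteq> {}" and "\<And>a b. a \<in> X \<Longrightarrow> b \<in> Y \<Longrightarrow> c \<le> \<rho> a b"
  shows "c \<le> quot_dist \<rho> X Y"
  unfolding quot_dist_def
  by (rule cInf_greatest) (use assms in auto)

lemma quot_dist_commute:
  assumes "\<And>a b. a \<in> X \<Longrightarrow> b \<in> Y \<Longrightarrow> \<rho> a b = \<rho> b a"
  shows "quot_dist \<rho> X Y = quot_dist \<rho> Y X"
proof -
  have "{\<rho> a b | a b. a \<in> X \<and> b \<in> Y} = {\<rho> a b | a b. a \<in> Y \<and> b \<in> X}"
    by (safe; metis assms)
  then show ?thesis
    unfolding quot_dist_def by simp
qed

context
  fixes A :: "'a set" and \<rho> :: "'a \<Rightarrow> 'a \<Rightarrow> real" and C :: real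
  assumes nonneg: "\<And>x y. x \<in> A \<Longrightarrow> y \<in> A \<Longrightarrow> 0 \<le> \<rho> x y"
    and refl: "\<And>x. x \<in> A \<Longrightarrow> \<rho> x x = 0"
    and sym: "\<And>x y. x \<in> A \<Longrightarrow> y \<in> A \<Longrightarrow> \<rho> x y = \<rho> y x"
    and C_ge_1: "C \<ge> 1"
    and triangle: "\<And>x y z. x \<in> A \<Longrightarrow> y \<in> A \<Longrightarrow> z \<in> A \<Longrightarrow> \<rho> x z \<le> C * (\<rho> x y + \<rho> y z)"
begin

lemma equiv_zero_rel: "equiv A (zero_rel A \<rho>)"
proof (rule equivI)
  show "zero_rel A \<rho> \<subseteq> A \<times> A"
    by (auto simp: zero_rel_def)
  show "refl_on A (zero_rel A \<rho>)"
    using refl by (auto simp: refl_on_def zero_rel_def)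
  show "sym (zero_rel A \<rho>)"
    using sym by (auto intro!: symI simp: zero_rel_def)
  show "trans (zero_rel A \<rho>)"
  proof (rule transI)
    fix x y z assume "(x, y) \<in> zero_rel A \<rho>" "(y, z) \<in> zero_rel A \<rho>"
    then show "(x, z) \<in> zero_rel A \<rho>"
      using triangle[of x y z] nonneg[of x z] by (auto simp: zero_rel_def)
  qed
qed

lemma dist_le_of_zero_rel:
  assumes "(x, a) \<in> zero_rel A \<rho>" "(y, b) \<in> zero_rel A \<rho>"
  shows "\<rho> x y \<le> C * C * \<rho> a b"
proof -
  from assms have xa: "x \<in> A" "a \<in> A" "\<rho> x a = 0" and yb: "y \<in> A" "b \<in> A" "\<rho> b y = 0"
    using sym by (auto simp: zero_rel_def)
  have "\<rho> x y \<le> C * \<rho> a y"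
    using triangle[of x a y] xa yb by simp
  also have "\<dots> \<le> C * (C * \<rho> a b)"
    using triangle[of a b y] xa yb C_ge_1 by simp
  finally show ?thesis
    by (simp add: mult.assoc)
qed

lemma quot_dist_class_le_dist:
  assumes "x \<in> A" "y \<in> A"
  shows "quot_dist \<rho> (zero_rel A \<rho> `` {x}) (zero_rel A \<rho> `` {y}) \<le> \<rho> x y"
  using assms refl nonneg by (intro quot_dist_lower) (auto simp: zero_rel_def)

lemma dist_le_quot_dist_class:
  assumes "x \<in> A" "y \<in> A"
  shows "\<rho> x y \<le> C * C * quot_dist \<rho> (zero_rel A \<rho> `` {x}) (zero_rel A \<rho> `` {y})"
proof -
  have "\<rho> x y / (C * C) \<le> quot_dist \<rho> (zero_rel A \<rho> `` {x}) (zero_rel A \<rho> `` {y})"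
  proof (rule quot_dist_greatest)
    show "zero_rel A \<rho> `` {x} \<noteq> {}" "zero_rel A \<rho> `` {y} \<noteq> {}"
      using assms refl by (auto simp: zero_rel_def)
    fix a b assume "a \<in> zero_rel A \<rho> `` {x}" "b \<in> zero_rel A \<rho> `` {y}"
    then show "\<rho> x y / (C * C) \<le> \<rho> a b"
      using dist_le_of_zero_rel C_ge_1 by (simp add: divide_le_eq mult.commute)
  qed
  then show ?thesis
    using C_ge_1 by (simp add: divide_le_eq mult.commute)
qed

lemma quot_dist_nonneg:
  assumes "X \<in> A // zero_rel A \<rho>" "Y \<in> A // zero_rel A \<rho>"
  shows "0 \<le> quot_dist \<rho> X Y"
proof -
  obtain x y where "x \<in> A" "y \<in> A" "X = zero_rel A \<rho> `` {x}" "Y = zero_rel A \<rho> `` {y}"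
    using assms by (auto elim!: quotientE)
  then have "0 \<le> C * C * quot_dist \<rho> X Y"
    using dist_le_quot_dist_class nonneg order_trans by blast
  moreover have "0 < C * C"
    using C_ge_1 by simp
  ultimately show ?thesis
    by (simp add: zero_le_mult_iff)
qed

lemma quot_dist_self:
  assumes "X \<in> A // zero_rel A \<rho>"
  shows "quot_dist \<rho> X X = 0"
proof -
  obtain x where "x \<in> A" "X = zero_rel A \<rho> `` {x}"
    using assms by (auto elim!: quotientE)
  then show ?thesis
    using quot_dist_class_le_dist[of x x] quot_dist_nonneg[OF assms assms] refl by simp
qed

lemma quot_dist_sym:
  assumes "X \<in> A // zero_rel A \<rho>" "Y \<in> A // zero_rel A \<rho>"
  shows "quot_dist \<rho> X Y = quot_dist \<rho> Y X"
  using assms sym equiv_zero_rel in_quotient_imp_subset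
  by (intro quot_dist_commute) blast

lemma quot_dist_triangle:
  assumes "X \<in> A // zero_rel A \<rho>" "Y \<in> A // zero_rel A \<rho>" "Z \<in> A // zero_rel A \<rho>"
  shows "quot_dist \<rho> X Z \<le> C * (C * C) * (quot_dist \<rho> X Y + quot_dist \<rho> Y Z)"
proof -
  obtain x y z where xyz: "x \<in> A" "y \<in> A" "z \<in> A"
    and "X = zero_rel A \<rho> `` {x}" "Y = zero_rel A \<rho> `` {y}" "Z = zero_rel A \<rho> `` {z}"
    using assms by (auto elim!: quotientE)
  then have "quot_dist \<rho> X Z \<le> \<rho> x z"
    using quot_dist_class_le_dist by blast
  also have "\<dots> \<le> C * (\<rho> x y + \<rho> y z)"
    using triangle xyz by blast
  also have "\<dots> \<le> C * (C * C * quot_dist \<rho> X Y + C * C * quot_dist \<rho> Y Z)"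
    using dist_le_quot_dist_class \<open>X = _\<close> \<open>Y = _\<close> \<open>Z = _\<close> xyz C_ge_1
    by (intro mult_left_mono add_mono) auto
  finally show ?thesis
    by (simp add: algebra_simps)
qed

lemma quot_dist_pos:
  assumes "X \<in> A // zero_rel A \<rho>" "Y \<in> A // zero_rel A \<rho>" "X \<noteq> Y"
  shows "0 < quot_dist \<rho> X Y"
proof -
  obtain x y where xy: "x \<in> A" "y \<in> A"
    and X: "X = zero_rel A \<rho> `` {x}" and Y: "Y = zero_rel A \<rho> `` {y}"
    using assms by (auto elim!: quotientE)
  then have "(x, y) \<notin> zero_rel A \<rho>"
    using assms(3) eq_equiv_class_iff[OF equiv_zero_rel] by blast
  then have "0 < \<rho> x y"
    using xy nonneg[of x y] by (auto simp: zero_rel_def)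
  also have "\<dots> \<le> C * C * quot_dist \<rho> X Y"
    using dist_le_quot_dist_class xy X Y by blast
  finally show ?thesis
    using C_ge_1 by (simp add: zero_less_mult_iff)
qed

lemma pseudo_metric_quotient: "pseudo_metric (A // zero_rel A \<rho>) (quot_dist \<rho>)"
proof -
  have "1 \<le> C * (C * C)"
    using C_ge_1 by (metis mult_mono' mult_1_left zero_le_one order_trans)
  then show ?thesis
    unfolding pseudo_metric_def pseudo_quasimetric_def
    using quot_dist_nonneg quot_dist_self quot_dist_sym quot_dist_triangle quot_dist_pos
    by blast
qed

end

theorem lemma2p1:
  fixes A :: "'a set" and \<rho> :: "'a \<Rightarrow> 'a \<Rightarrow> real"
  assumes "pseudo_quasimetric A \<rho>"
  shows "pseudo_metric (A // zero_rel A \<rho>) (quot_dist \<rho>)"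
proof -
  obtain C where "C \<ge> 1"
    and "\<forall>x\<in>A. \<forall>y\<in>A. \<forall>z\<in>A. \<rho> x z \<le> C * (\<rho> x y + \<rho> y z)"
    using assms unfolding pseudo_quasimetric_def by blast
  with assms show ?thesis
    unfolding pseudo_quasimetric_def by (intro pseudo_metric_quotient[of A \<rho> C]) auto
qed

end
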